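(* Let $H$ be an infinite-dimensional complex Hilbert space, let $\mathcal{G}_{\infty}(H)$ be the set of all closed subspaces of $H$ whose dimension and codimension are both infinite, and let $f:\mathcal{G}_{\infty}(H)\to\mathcal{G}_{\infty}(H)$ send every pair of subspaces to an equivalent pair of subspaces. Then $f$ is inclusion preserving in both directions: for $X,Y\in\mathcal{G}_{\infty}(H)$, $X\subset Y$ if and only if $f(X)\subset f(Y)$.
   Context: Two pairs of closed subspaces are equivalent if some linear (norm-preserving, not necessarily surjective) isometry of $H$ transfers one pair (as an unordered pair) to the other; $f$ sends every pair to an equivalent pair if for all $X,Y$ there is a linear isometry $M$ with $\{f(X),f(Y)\}=\{M(X),M(Y)\}$. *)

theory Defs
  imports "HOL-Analysis.Analysis"
begin

text \<open>A complex Hilbert space: a complete real inner product space carrying a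
complex scalar multiplication extending the real one, whose norm is absolutely
homogeneous for complex scalars (so the norm comes from a complex inner product,
obtained by polarization).\<close>

class complex_hilbert = real_inner + complete_space +
  fixes cscale :: "complex \<Rightarrow> 'a \<Rightarrow> 'a"
  assumes cscale_add_right: "cscale a (x + y) = cscale a x + cscale a y"
    and cscale_add_left: "cscale (a + b) x = cscale a x + cscale b x"
    and cscale_cscale: "cscale a (cscale b x) = cscale (a * b) x"
    and cscale_one: "cscale 1 x = x"
    and scaleR_cscale: "scaleR r x = cscale (complex_of_real r) x"
    and norm_cscale: "norm (cscale a x) = cmod a * norm x"

definition csubspace :: "'a::complex_hilbert set \<Rightarrow> bool" where
  "csubspace S \<longleftrightarrow> 0 \<in> S \<and> (\<forall>x\<in>S. \<forall>y\<in>S. x + y \<in> S) \<and> (\<forall>c. \<forall>x\<in>S. cscale c x \<in> S)"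

definition cspan :: "'a::complex_hilbert set \<Rightarrow> 'a set" where
  "cspan B = {x. \<exists>F c. finite F \<and> F \<subseteq> B \<and> x = (\<Sum>b\<in>F. cscale (c b) b)}"

definition inf_dim :: "'a::complex_hilbert set \<Rightarrow> bool" where
  "inf_dim S \<longleftrightarrow> \<not> (\<exists>B. finite B \<and> S \<subseteq> cspan B)"

text \<open>Infinite codimension: H/S is infinite-dimensional, i.e. no finite set B with
S + span B = H.\<close>
definition inf_codim :: "'a::complex_hilbert set \<Rightarrow> bool" where
  "inf_codim S \<longleftrightarrow> \<not> (\<exists>B. finite B \<and> UNIV \<subseteq> cspan (S \<union> B))"

definition G_inf :: "'a::complex_hilbert set set" where
  "G_inf = {X. csubspace X \<and> closed X \<and> inf_dim X \<and> inf_codim X}"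

definition clinear_isometry :: "('a::complex_hilbert \<Rightarrow> 'a) \<Rightarrow> bool" where
  "clinear_isometry M \<longleftrightarrow> (\<forall>x y. M (x + y) = M x + M y) \<and> (\<forall>c x. M (cscale c x) = cscale c (M x))
     \<and> (\<forall>x. norm (M x) = norm x)"

end

theory Submission
  imports Defs
begin

(* A pair of subspaces and its image under an injective linear map satisfy the same symmetric
   relations expressible through inclusion, equality and intersection. Hence f is injective,
   maps comparable pairs (under inclusion) exactly to comparable pairs, and preserves trivial
   intersection; only the direction of an inclusion X \<subseteq> Y could be reversed by f.
   To exclude f Y \<subset> f X, split an infinite orthonormal family orthogonal to Y into two
   infinite parts U and W and put Z\<^sub>0 = (Y \<union> W)\<^sup>\<bottom> and Z = (W \<union> (Y \<ominus> X))\<^sup>\<bottom>.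
   These lie in G_inf and satisfy Z\<^sub>0 \<subseteq> Z, X \<subseteq> Z, Z\<^sub>0 \<inter> X = 0 and Y \<inter> Z = X.
   Comparability then forces f X \<subseteq> f Z, so f Y and f Z are comparable, and either
   alternative contradicts Y \<inter> Z = X \<noteq> Y or Z\<^sub>0 \<inter> X = 0. *)

section \<open>Nearest points in real Hilbert spaces\<close>

lemma apollonius_identity:
  fixes x y z :: "'a::real_inner"
  shows "(norm (y - z))\<^sup>2 = 2 * (norm (x - y))\<^sup>2 + 2 * (norm (x - z))\<^sup>2 - 4 * (norm (x - midpoint y z))\<^sup>2"
  by (simp add: midpoint_def power2_norm_eq_inner inner_diff_left inner_diff_right inner_add_left
      inner_add_right inner_commute algebra_simps)

lemma Cauchy_if_dist_sq_le:
  fixes y :: "nat \<Rightarrow> 'a::metric_space"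
  assumes dist_le: "\<And>m n. (dist (y m) (y n))\<^sup>2 \<le> e m + e n" and "e \<longlonglongrightarrow> 0"
  shows "Cauchy y"
proof (rule metric_CauchyI)
  fix r :: real
  assume "r > 0"
  then obtain N where N: "\<And>n. N \<le> n \<Longrightarrow> \<bar>e n\<bar> < r\<^sup>2 / 2"
    using LIMSEQ_D [OF \<open>e \<longlonglongrightarrow> 0\<close>, of "r\<^sup>2 / 2"] by auto
  have "dist (y m) (y n) < r" if "N \<le> m" "N \<le> n" for m n
  proof -
    have "(dist (y m) (y n))\<^sup>2 < r\<^sup>2"
      using dist_le [of m n] N [OF that(1)] N [OF that(2)] by (simp add: abs_less_iff)
    then show ?thesis
      using \<open>r > 0\<close> power_less_imp_less_base by fastforce
  qed
  then show "\<exists>M. \<forall>m\<ge>M. \<forall>n\<ge>M. dist (y m) (y n) < r"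
    by blast
qed

lemma nearest_point_exists:
  fixes S :: "'a::{real_inner,complete_space} set"
  assumes "closed S" "convex S" "S \<noteq> {}"
  shows "\<exists>p\<in>S. \<forall>y\<in>S. norm (x - p) \<le> norm (x - y)"
proof -
  define d where "d = Inf ((\<lambda>y. (norm (x - y))\<^sup>2) ` S)"
  have bdd: "bdd_below ((\<lambda>y. (norm (x - y))\<^sup>2) ` S)"
    by (rule bdd_belowI [of _ 0]) auto
  have d_le: "d \<le> (norm (x - y))\<^sup>2" if "y \<in> S" for y
    unfolding d_def using that bdd by (simp add: cInf_lower)
  have "\<exists>y\<in>S. (norm (x - y))\<^sup>2 < d + 1 / Suc n" for n
    using \<open>S \<noteq> {}\<close> bdd cInf_less_iff [of "(\<lambda>y. (norm (x - y))\<^sup>2) ` S" "d + 1 / Suc n"]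
    by (auto simp: d_def)
  then obtain y where y_in: "\<And>n. y n \<in> S" and y_near: "\<And>n. (norm (x - y n))\<^sup>2 < d + 1 / Suc n"
    by metis
  have "Cauchy y"
  proof (rule Cauchy_if_dist_sq_le [where e = "\<lambda>n. 2 / Suc n"])
    show "(dist (y m) (y n))\<^sup>2 \<le> 2 / Suc m + 2 / Suc n" for m n
    proof -
      have "midpoint (y m) (y n) \<in> S"
        using convexD [OF \<open>convex S\<close> y_in y_in, of "1/2" "1/2"]
        by (simp add: midpoint_def scaleR_right_distrib)
      then have "d \<le> (norm (x - midpoint (y m) (y n)))\<^sup>2"
        by (rule d_le)
      moreover have "2 / real (Suc k) = 2 * (1 / Suc k)" for k
        by simp
      ultimately show ?thesis
        unfolding dist_norm using apollonius_identity [of "y m" "y n" x] y_near [of m] y_near [of n]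
        by linarith
    qed
    show "(\<lambda>n. 2 / Suc n) \<longlonglongrightarrow> 0"
      using tendsto_mult_right_zero [OF LIMSEQ_inverse_real_of_nat, of 2]
      by (simp add: divide_inverse)
  qed
  then obtain p where "y \<longlonglongrightarrow> p"
    using Cauchy_convergent_iff convergent_def by blast
  have "p \<in> S"
    using \<open>closed S\<close> y_in \<open>y \<longlonglongrightarrow> p\<close> closed_sequentially by blast
  have "(norm (x - p))\<^sup>2 \<le> d"
  proof (rule tendsto_le [OF sequentially_bot])
    show "(\<lambda>n. (norm (x - y n))\<^sup>2) \<longlonglongrightarrow> (norm (x - p))\<^sup>2"
      by (intro tendsto_intros \<open>y \<longlonglongrightarrow> p\<close>)
    show "(\<lambda>n. d + 1 / Suc n) \<longlonglongrightarrow> d"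
      using tendsto_add [OF tendsto_const LIMSEQ_inverse_real_of_nat] by (simp add: inverse_eq_divide)
    show "\<forall>\<^sub>F n in sequentially. (norm (x - y n))\<^sup>2 \<le> d + 1 / Suc n"
      using y_near by (simp add: less_imp_le)
  qed
  then show ?thesis
    using \<open>p \<in> S\<close> d_le by (meson order_trans power2_le_imp_le norm_ge_zero)
qed

lemma nearest_point_orthogonal:
  fixes S :: "'a::real_inner set"
  assumes "subspace S" "p \<in> S" "v \<in> S" and nearest: "\<And>y. y \<in> S \<Longrightarrow> norm (x - p) \<le> norm (x - y)"
  shows "(x - p) \<bullet> v = 0"
proof (cases "v = 0")
  case False
  define a where "a = (x - p) \<bullet> v"
  define t where "t = a / (v \<bullet> v)"
  have "v \<bullet> v > 0"
    using False by simp
  have "p + t *\<^sub>R v \<in> S"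
    using assms by (simp add: subspace_add subspace_scale)
  then have "(norm (x - p))\<^sup>2 \<le> (norm (x - (p + t *\<^sub>R v)))\<^sup>2"
    using nearest by (simp add: power_mono)
  also have "\<dots> = (norm (x - p))\<^sup>2 - 2 * t * a + t\<^sup>2 * (v \<bullet> v)"
    unfolding power2_norm_eq_inner a_def
    by (simp add: inner_diff_left inner_diff_right inner_add_left inner_add_right
        inner_commute algebra_simps power2_eq_square)
  also have "\<dots> = (norm (x - p))\<^sup>2 - a\<^sup>2 / (v \<bullet> v)"
    using \<open>v \<bullet> v > 0\<close> by (simp add: t_def power2_eq_square field_simps)
  finally have "a\<^sup>2 \<le> 0"
    using \<open>v \<bullet> v > 0\<close> by (simp add: divide_le_0_iff)
  then show ?thesis
    by (simp add: a_def)
qed simp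

section \<open>The complex inner product\<close>

interpretation cvs: vector_space "cscale :: complex \<Rightarrow> 'a::complex_hilbert \<Rightarrow> 'a"
  by unfold_locales (auto simp: cscale_add_right cscale_add_left cscale_cscale cscale_one)

lemma cspan_eq_span: "cspan B = cvs.span B"
  unfolding cspan_def cvs.span_explicit by auto

lemma csubspace_iff_subspace: "csubspace S \<longleftrightarrow> cvs.subspace S"
  by (simp add: csubspace_def cvs.subspace_def)

lemma csubspace_imp_subspace: "csubspace S \<Longrightarrow> subspace S"
  by (simp add: csubspace_def subspace_def scaleR_cscale)

definition J :: "'a::complex_hilbert \<Rightarrow> 'a" where
  "J x = cscale \<i> x"

lemma cscale_eq_scaleR_J: "cscale c x = Re c *\<^sub>R x + Im c *\<^sub>R J x"
proof -
  have "c = complex_of_real (Re c) + complex_of_real (Im c) * \<i>"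
    by (simp add: complex_eq_iff)
  then have "cscale c x = cscale (complex_of_real (Re c)) x + cscale (complex_of_real (Im c)) (J x)"
    by (metis cscale_add_left cscale_cscale J_def)
  then show ?thesis
    by (simp only: scaleR_cscale)
qed

lemma J_J: "J (J x) = - x"
  by (simp add: J_def cscale_cscale scaleR_cscale [of "-1", symmetric])

lemma J_add: "J (x + y) = J x + J y"
  by (simp add: J_def cscale_add_right)

lemma norm_J: "norm (J x) = norm x"
  by (simp add: J_def norm_cscale)

lemma inner_J_J: "J x \<bullet> J y = x \<bullet> y"
proof -
  have "(J x + J y) \<bullet> (J x + J y) = (x + y) \<bullet> (x + y)"
    by (metis J_add norm_J power2_norm_eq_inner)
  moreover have "J x \<bullet> J x = x \<bullet> x" "J y \<bullet> J y = y \<bullet> y"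
    by (metis norm_J power2_norm_eq_inner)+
  ultimately show ?thesis
    by (simp add: inner_add_left inner_add_right inner_commute)
qed

lemma inner_J_left: "J x \<bullet> y = - (x \<bullet> J y)"
proof -
  have "J x \<bullet> y = J (J x) \<bullet> J y"
    by (simp add: inner_J_J)
  then show ?thesis
    by (simp add: J_J)
qed

lemma inner_J_swap: "y \<bullet> J x = - (x \<bullet> J y)"
  using inner_J_left [of x y] by (simp add: inner_commute)

lemma inner_J_self: "x \<bullet> J x = 0"
  using inner_J_left [of x x] by (simp add: inner_commute)

definition cinner :: "'a::complex_hilbert \<Rightarrow> 'a \<Rightarrow> complex" where
  "cinner x y = Complex (x \<bullet> y) (x \<bullet> J y)"

lemma cinner_add_left: "cinner (x + y) z = cinner x z + cinner y z"
  by (simp add: cinner_def inner_add_left complex_eq_iff)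

lemma cinner_diff_left: "cinner (x - y) z = cinner x z - cinner y z"
  by (simp add: cinner_def inner_diff_left complex_eq_iff)

lemma cinner_cscale_left: "cinner (cscale c x) y = c * cinner x y"
  by (simp add: cinner_def cscale_eq_scaleR_J inner_add_left inner_J_left inner_J_J J_J
      complex_eq_iff algebra_simps)

lemma cinner_sum_left: "cinner (\<Sum>i\<in>A. f i) y = (\<Sum>i\<in>A. cinner (f i) y)"
  by (simp add: cinner_def inner_sum_left complex_eq_iff)

lemma cinner_zero_left [simp]: "cinner 0 y = 0"
  by (simp add: cinner_def complex_eq_iff)

lemma cinner_commute: "cinner y x = cnj (cinner x y)"
  by (simp add: cinner_def complex_eq_iff inner_commute inner_J_swap [of y x])

lemma cinner_eq_zero_commute: "cinner y x = 0 \<longleftrightarrow> cinner x y = 0"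
  by (subst cinner_commute) simp

lemma cinner_self: "cinner x x = complex_of_real ((norm x)\<^sup>2)"
  by (simp add: cinner_def complex_eq_iff power2_norm_eq_inner inner_J_self)

lemma cinner_self_eq_zero [simp]: "cinner x x = 0 \<longleftrightarrow> x = 0"
  by (simp add: cinner_self)

definition corth :: "'a::complex_hilbert set \<Rightarrow> 'a set" where
  "corth S = {x. \<forall>s\<in>S. cinner x s = 0}"

lemma subset_corth_commute: "S \<subseteq> corth T \<longleftrightarrow> T \<subseteq> corth S"
  unfolding corth_def using cinner_eq_zero_commute by blast

lemma corth_antimono: "S \<subseteq> T \<Longrightarrow> corth T \<subseteq> corth S"
  by (auto simp: corth_def)

lemma corth_Un: "corth (S \<union> T) = corth S \<inter> corth T"
  by (auto simp: corth_def)

lemma Int_corth_subset: "S \<inter> corth S \<subseteq> {0}"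
  by (auto simp: corth_def)

lemma csubspace_corth: "csubspace (corth S)"
  by (simp add: csubspace_def corth_def cinner_add_left cinner_cscale_left)

lemma closed_corth: "closed (corth S)"
proof -
  have "corth S = (\<Inter>s\<in>S. {x. x \<bullet> s = 0} \<inter> {x. x \<bullet> J s = 0})"
    by (auto simp: corth_def cinner_def complex_eq_iff)
  moreover have "closed {x. x \<bullet> a = 0}" for a :: 'a
    using closed_hyperplane [of a 0] by (simp add: inner_commute)
  ultimately show ?thesis
    by (auto intro!: closed_INT closed_Int)
qed

lemma orthogonal_decomposition:
  assumes "closed S" "csubspace S"
  shows "\<exists>p\<in>S. x - p \<in> corth S"
proof -
  have "subspace S"
    using assms(2) by (rule csubspace_imp_subspace)
  then obtain p where "p \<in> S" and nearest: "\<And>y. y \<in> S \<Longrightarrow> norm (x - p) \<le> norm (x - y)"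
    using nearest_point_exists [OF assms(1) subspace_imp_convex] subspace_0 by blast
  have "(x - p) \<bullet> y = 0" if "y \<in> S" for y
    using nearest_point_orthogonal [OF \<open>subspace S\<close> \<open>p \<in> S\<close> that nearest] by blast
  moreover have "J y \<in> S" if "y \<in> S" for y
    using assms(2) that by (simp add: csubspace_def J_def)
  ultimately show ?thesis
    using \<open>p \<in> S\<close> by (auto simp: corth_def cinner_def complex_eq_iff)
qed

section \<open>Orthonormal families\<close>

definition corthonormal :: "'a::complex_hilbert set \<Rightarrow> bool" where
  "corthonormal E \<longleftrightarrow> (\<forall>e\<in>E. norm e = 1) \<and> (\<forall>e\<in>E. \<forall>f\<in>E. e \<noteq> f \<longrightarrow> cinner e f = 0)"

lemma corthonormal_subset: "corthonormal E \<Longrightarrow> F \<subseteq> E \<Longrightarrow> corthonormal F"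
  by (auto simp: corthonormal_def)

lemma cinner_corthonormal:
  assumes "corthonormal E" "e \<in> E" "f \<in> E"
  shows "cinner e f = (if e = f then 1 else 0)"
  using assms by (auto simp: corthonormal_def cinner_self)

lemma corthonormal_independent:
  assumes "corthonormal E"
  shows "cvs.independent E"
  unfolding cvs.independent_explicit_finite_subsets
proof (intro allI impI ballI)
  fix T u w
  assume T: "T \<subseteq> E" "finite T" and sum: "(\<Sum>v\<in>T. cscale (u v) v) = 0" and "w \<in> T"
  have "cinner v w = (if v = w then 1 else 0)" if "v \<in> T" for v
    using that T \<open>w \<in> T\<close> cinner_corthonormal [OF assms] by blast
  then have "(\<Sum>v\<in>T. cinner (cscale (u v) v) w) = (\<Sum>v\<in>T. if v = w then u v else 0)"
    by (intro sum.cong) (auto simp: cinner_cscale_left)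
  also have "\<dots> = u w"
    using T \<open>w \<in> T\<close> by simp
  finally show "u w = 0"
    using sum by (simp flip: cinner_sum_left)
qed

lemma inf_dim_mono: "inf_dim S \<Longrightarrow> S \<subseteq> T \<Longrightarrow> inf_dim T"
  unfolding inf_dim_def by blast

lemma inf_codim_antimono: "inf_codim T \<Longrightarrow> S \<subseteq> T \<Longrightarrow> inf_codim S"
  unfolding inf_codim_def cspan_eq_span using cvs.span_mono [of "S \<union> _" "T \<union> _"] by blast

lemma inf_dim_if_corthonormal_subset:
  assumes "corthonormal E" "infinite E" "E \<subseteq> S"
  shows "inf_dim S"
  unfolding inf_dim_def cspan_eq_span
proof
  assume "\<exists>B. finite B \<and> S \<subseteq> cvs.span B"
  then obtain B where "finite B" "E \<subseteq> cvs.span B"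
    using assms(3) by blast
  then show False
    using cvs.independent_span_bound [OF _ corthonormal_independent [OF assms(1)]] assms(2) by blast
qed

definition cproj :: "'a::complex_hilbert \<Rightarrow> 'a \<Rightarrow> 'a" where
  "cproj e x = cscale (cinner x e) e"

lemma cproj_in_span: "cproj e x \<in> cvs.span {e}"
  by (simp add: cproj_def cvs.span_scale cvs.span_base)

lemma cinner_sum_cproj:
  assumes "corthonormal E" "finite E" "f \<in> E"
  shows "cinner (\<Sum>e\<in>E. cproj e x) f = cinner x f"
proof -
  have "cinner (cproj e x) f = (if e = f then cinner x f else 0)" if "e \<in> E" for e
    using cinner_corthonormal [OF assms(1) that assms(3)] by (simp add: cproj_def cinner_cscale_left)
  then have "cinner (\<Sum>e\<in>E. cproj e x) f = (\<Sum>e\<in>E. if e = f then cinner x f else 0)"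
    by (simp add: cinner_sum_left)
  then show ?thesis
    using assms by simp
qed

lemma sum_cproj_self:
  assumes "corthonormal E" "finite E" "f \<in> E"
  shows "(\<Sum>e\<in>E. cproj e f) = f"
proof -
  have "cproj e f = (if e = f then f else 0)" if "e \<in> E" for e
    using cinner_corthonormal [OF assms(1,3) that] by (simp add: cproj_def cscale_one)
  then show ?thesis
    using assms(2,3) by simp
qed

lemma sum_cproj_eq_zero: "x \<in> corth E \<Longrightarrow> (\<Sum>e\<in>E. cproj e x) = 0"
  by (simp add: corth_def cproj_def)

lemma sum_cproj_in_span: "(\<Sum>e\<in>E. cproj e x) \<in> cvs.span E"
  using cproj_in_span cvs.span_mono [of "{_}" E] by (intro cvs.span_sum) blast

lemma module_hom_sum_cproj: "module_hom cscale cscale (\<lambda>x. \<Sum>e\<in>E. cproj e x)"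
  unfolding module_hom_iff_linear Vector_Spaces.linear_iff
  by (auto simp: cproj_def cinner_add_left cinner_cscale_left cscale_add_left cscale_cscale
      sum.distrib cvs.vector_space_axioms cvs.scale_sum_right)

lemma inf_codim_if_corthonormal_subset_corth:
  assumes "corthonormal E" "infinite E" "E \<subseteq> corth S"
  shows "inf_codim S"
  unfolding inf_codim_def cspan_eq_span
proof
  assume "\<exists>B. finite B \<and> UNIV \<subseteq> cvs.span (S \<union> B)"
  then obtain B where "finite B" and B: "UNIV \<subseteq> cvs.span (S \<union> B)"
    by blast
  obtain F where "finite F" "card F = Suc (card B)" "F \<subseteq> E"
    using infinite_arbitrarily_large [OF assms(2)] by blast
  then have "corthonormal F"
    using assms(1) corthonormal_subset by blast
  define P where "P x = (\<Sum>e\<in>F. cproj e x)" for x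
  have "F = P ` F"
    using sum_cproj_self [OF \<open>corthonormal F\<close> \<open>finite F\<close>] by (force simp: P_def)
  also have "\<dots> \<subseteq> P ` cvs.span (S \<union> B)"
    using B by blast
  also have "\<dots> = cvs.span (P ` (S \<union> B))"
    unfolding P_def by (rule module_hom.span_image [OF module_hom_sum_cproj, symmetric])
  also have "\<dots> \<subseteq> cvs.span (insert 0 (P ` B))"
  proof (rule cvs.span_mono)
    have "S \<subseteq> corth F"
      using assms(3) \<open>F \<subseteq> E\<close> subset_corth_commute by blast
    then show "P ` (S \<union> B) \<subseteq> insert 0 (P ` B)"
      using sum_cproj_eq_zero by (auto simp: P_def)
  qed
  finally have "card F \<le> card (P ` B)"
    using cvs.independent_span_bound [OF _ corthonormal_independent [OF \<open>corthonormal F\<close>]]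
      \<open>finite B\<close> by (simp add: cvs.span_insert_0)
  also have "\<dots> \<le> card B"
    using \<open>finite B\<close> by (rule card_image_le)
  finally show False
    using \<open>card F = Suc (card B)\<close> by simp
qed

lemma exists_unit_in_corth:
  assumes "closed Y" "csubspace Y" "inf_codim Y" "finite E" "corthonormal E" "E \<subseteq> corth Y"
  shows "\<exists>v. norm v = 1 \<and> v \<in> corth (Y \<union> E)"
proof -
  obtain x where x: "x \<notin> cvs.span (Y \<union> E)"
    using assms(3,4) unfolding inf_codim_def cspan_eq_span by blast
  obtain p where "p \<in> Y" "x - p \<in> corth Y"
    using orthogonal_decomposition [OF assms(1,2)] by blast
  define w where "w = (x - p) - (\<Sum>e\<in>E. cproj e (x - p))"
  have sub: "cvs.subspace (corth Y)"
    using csubspace_corth csubspace_iff_subspace by blast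
  have "cproj e (x - p) \<in> corth Y" if "e \<in> E" for e
    using that assms(6) cvs.subspace_scale [OF sub] by (auto simp: cproj_def)
  then have "(\<Sum>e\<in>E. cproj e (x - p)) \<in> corth Y"
    by (rule cvs.subspace_sum [OF sub])
  then have "w \<in> corth Y"
    unfolding w_def using \<open>x - p \<in> corth Y\<close> cvs.subspace_diff [OF sub] by blast
  moreover have "w \<in> corth E"
    using cinner_sum_cproj [OF assms(5,4)] by (simp add: corth_def w_def cinner_diff_left)
  ultimately have w: "w \<in> corth (Y \<union> E)"
    by (simp add: corth_Un)
  have "w \<noteq> 0"
  proof
    assume "w = 0"
    have "p \<in> cvs.span (Y \<union> E)"
      using \<open>p \<in> Y\<close> by (simp add: cvs.span_base)
    moreover have "(\<Sum>e\<in>E. cproj e (x - p)) \<in> cvs.span (Y \<union> E)"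
      using sum_cproj_in_span cvs.span_mono [of E "Y \<union> E"] by blast
    ultimately have "p + (\<Sum>e\<in>E. cproj e (x - p)) \<in> cvs.span (Y \<union> E)"
      by (rule cvs.span_add)
    moreover have "x = p + (\<Sum>e\<in>E. cproj e (x - p))"
      using \<open>w = 0\<close> by (simp add: w_def algebra_simps)
    ultimately show False
      using x by simp
  qed
  moreover have "(1 / norm w) *\<^sub>R w \<in> corth (Y \<union> E)"
    using w csubspace_corth [of "Y \<union> E"] by (simp add: csubspace_def scaleR_cscale)
  ultimately show ?thesis
    by (intro exI [of _ "(1 / norm w) *\<^sub>R w"]) simp
qed

lemma corthonormal_insert:
  assumes "corthonormal E" "norm v = 1" "v \<in> corth E"
  shows "corthonormal (insert v E)"
  using assms by (auto simp: corthonormal_def corth_def cinner_eq_zero_commute [of _ v])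

lemma corthonormal_disjoint_subset_corth:
  assumes "corthonormal E" "U \<subseteq> E" "W \<subseteq> E" "U \<inter> W = {}"
  shows "U \<subseteq> corth W"
proof
  fix u
  assume "u \<in> U"
  have "cinner u w = 0" if "w \<in> W" for w
  proof -
    have "u \<noteq> w"
      using \<open>u \<in> U\<close> that assms(4) by blast
    moreover have "u \<in> E" "w \<in> E"
      using \<open>u \<in> U\<close> that assms(2,3) by blast+
    ultimately show ?thesis
      using cinner_corthonormal [OF assms(1)] by simp
  qed
  then show "u \<in> corth W"
    by (simp add: corth_def)
qed

lemma corthonormal_UN_chain:
  fixes F :: "nat \<Rightarrow> 'a::complex_hilbert set"
  assumes "\<And>n. corthonormal (F n)" "\<And>m n. m \<le> n \<Longrightarrow> F m \<subseteq> F n"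
  shows "corthonormal (\<Union>n. F n)"
  unfolding corthonormal_def
proof (intro conjI ballI impI)
  fix e f
  assume "e \<in> (\<Union>n. F n)" "f \<in> (\<Union>n. F n)" "e \<noteq> f"
  then obtain m n where "e \<in> F m" "f \<in> F n"
    by blast
  moreover have "F m \<subseteq> F (max m n)" "F n \<subseteq> F (max m n)"
    using assms(2) by simp_all
  ultimately have "e \<in> F (max m n)" "f \<in> F (max m n)"
    by blast+
  then show "cinner e f = 0"
    using assms(1) [of "max m n"] \<open>e \<noteq> f\<close> by (auto simp: corthonormal_def)
qed (use assms(1) in \<open>auto simp: corthonormal_def\<close>)

lemma exists_infinite_corthonormal_in_corth:
  assumes "closed Y" "csubspace Y" "inf_codim Y"
  shows "\<exists>E. corthonormal E \<and> infinite E \<and> E \<subseteq> corth Y"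
proof -
  define good where "good n E \<longleftrightarrow> finite E \<and> card E = n \<and> corthonormal E \<and> E \<subseteq> corth Y"
    for n E
  have "\<exists>E'. good (Suc n) E' \<and> E \<subseteq> E'" if E: "good n E" for n E
  proof -
    obtain v where v: "norm v = 1" "v \<in> corth (Y \<union> E)"
      using exists_unit_in_corth [OF assms] E by (auto simp: good_def)
    have "v \<notin> E"
      using v Int_corth_subset [of E] by (auto simp: corth_Un)
    moreover have "corthonormal (insert v E)"
      using E v by (intro corthonormal_insert) (auto simp: good_def corth_Un)
    ultimately have "good (Suc n) (insert v E)"
      using E v by (auto simp: good_def corth_Un)
    then show ?thesis
      by blast
  qed
  moreover have "good 0 {}"
    by (simp add: good_def corthonormal_def)
  ultimately obtain F where F: "\<And>n. good n (F n)" and "\<And>n. F n \<subseteq> F (Suc n)"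
    using dependent_nat_choice [of good "\<lambda>_ E E'. E \<subseteq> E'"] by blast
  then have F_mono: "F m \<subseteq> F n" if "m \<le> n" for m n
    using that lift_Suc_mono_le [of F] by blast
  have "corthonormal (\<Union>n. F n)"
    using F F_mono by (intro corthonormal_UN_chain) (auto simp: good_def)
  moreover have "infinite (\<Union>n. F n)"
  proof
    assume "finite (\<Union>n. F n)"
    then have "card (F n) \<le> card (\<Union>n. F n)" for n
      by (intro card_mono) auto
    then have "card (F (Suc (card (\<Union>n. F n)))) \<le> card (\<Union>n. F n)" .
    then show False
      using F [of "Suc (card (\<Union>n. F n))"] by (simp add: good_def)
  qed
  moreover have "(\<Union>n. F n) \<subseteq> corth Y"
    using F by (auto simp: good_def)
  ultimately show ?thesis
    by blast
qed

lemma infinite_split_disjoint: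
  assumes "infinite E"
  obtains U W where "U \<subseteq> E" "W \<subseteq> E" "U \<inter> W = {}" "infinite U" "infinite W"
proof -
  obtain g :: "nat \<Rightarrow> _" where "inj g" "range g \<subseteq> E"
    using infinite_countable_subset [OF assms] by blast
  have "infinite (range (\<lambda>n. g (2 * n)))" "infinite (range (\<lambda>n. g (2 * n + 1)))"
    by (auto intro!: range_inj_infinite injI dest!: injD [OF \<open>inj g\<close>])
  moreover have "g (2 * m) \<noteq> g (2 * n + 1)" for m n
  proof
    assume "g (2 * m) = g (2 * n + 1)"
    then have "2 * m = 2 * n + 1"
      by (rule injD [OF \<open>inj g\<close>])
    then show False
      by presburger
  qed
  ultimately show ?thesis
    using \<open>range g \<subseteq> E\<close>
    by (intro that [of "range (\<lambda>n. g (2 * n))" "range (\<lambda>n. g (2 * n + 1))"]) auto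
qed

section \<open>Subspaces separating a nested pair\<close>

lemma Int_corth_Int_corth_subset:
  assumes "closed X" "csubspace X" "csubspace Y" "X \<subseteq> Y"
  shows "Y \<inter> corth (Y \<inter> corth X) \<subseteq> X"
proof
  fix y
  assume y: "y \<in> Y \<inter> corth (Y \<inter> corth X)"
  obtain p where "p \<in> X" "y - p \<in> corth X"
    using orthogonal_decomposition [OF assms(1,2)] by blast
  moreover have "y - p \<in> Y"
    using y \<open>p \<in> X\<close> assms(3,4) csubspace_iff_subspace cvs.subspace_diff by blast
  ultimately have "cinner y (y - p) = 0" "cinner p (y - p) = 0"
    using y by (auto simp: corth_def cinner_eq_zero_commute)
  then have "y = p"
    using cinner_self_eq_zero [of "y - p"] by (simp add: cinner_diff_left)
  then show "y \<in> X"
    using \<open>p \<in> X\<close> by simp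
qed

lemma G_inf_not_subset_zero: "S \<in> G_inf \<Longrightarrow> \<not> S \<subseteq> {0}"
  unfolding G_inf_def inf_dim_def cspan_eq_span using cvs.span_zero [of "{}"] by blast

lemma exists_separating_pair:
  assumes "X \<in> G_inf" "Y \<in> G_inf" "X \<subseteq> Y"
  shows "\<exists>Z\<^sub>0\<in>G_inf. \<exists>Z\<in>G_inf. Z\<^sub>0 \<subseteq> Z \<and> X \<subseteq> Z \<and> Z\<^sub>0 \<inter> X \<subseteq> {0} \<and> Y \<inter> Z \<subseteq> X"
proof -
  have X: "closed X" "csubspace X" "inf_dim X" and Y: "closed Y" "csubspace Y" "inf_codim Y"
    using assms by (auto simp: G_inf_def)
  obtain E where E: "corthonormal E" "infinite E" "E \<subseteq> corth Y"
    using exists_infinite_corthonormal_in_corth [OF Y] by blast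
  obtain U W where UW: "U \<subseteq> E" "W \<subseteq> E" "U \<inter> W = {}" "infinite U" "infinite W"
    using infinite_split_disjoint [OF E(2)] by blast
  define Z\<^sub>0 where "Z\<^sub>0 = corth (Y \<union> W)"
  define Z where "Z = corth (W \<union> (Y \<inter> corth X))"
  have "Z\<^sub>0 \<subseteq> Z"
    unfolding Z\<^sub>0_def Z_def by (rule corth_antimono) auto
  have "X \<subseteq> Z"
    using \<open>X \<subseteq> Y\<close> UW(2) E(3) subset_corth_commute [of W Y] subset_corth_commute [of X "Y \<inter> corth X"]
    by (auto simp: Z_def corth_Un)
  have "Z\<^sub>0 \<inter> X \<subseteq> {0}"
    using \<open>X \<subseteq> Y\<close> Int_corth_subset [of Y] by (auto simp: Z\<^sub>0_def corth_Un)
  have "Y \<inter> Z \<subseteq> X"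
    using Int_corth_Int_corth_subset [OF X(1,2) Y(2) \<open>X \<subseteq> Y\<close>] by (auto simp: Z_def corth_Un)
  have "corthonormal U" "corthonormal W"
    using E(1) UW(1,2) corthonormal_subset by blast+
  have "U \<subseteq> corth W"
    using E(1) UW(1-3) by (rule corthonormal_disjoint_subset_corth)
  then have "U \<subseteq> Z\<^sub>0"
    using UW(1) E(3) by (auto simp: Z\<^sub>0_def corth_Un)
  then have "inf_dim Z\<^sub>0"
    using inf_dim_if_corthonormal_subset \<open>corthonormal U\<close> UW(4) by blast
  have "inf_codim Z"
    using inf_codim_if_corthonormal_subset_corth [OF \<open>corthonormal W\<close> UW(5)]
      subset_corth_commute [of Z W] by (auto simp: Z_def corth_Un)
  have "Z\<^sub>0 \<in> G_inf" "Z \<in> G_inf"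
    using \<open>inf_dim Z\<^sub>0\<close> \<open>inf_codim Z\<close> inf_codim_antimono [OF \<open>inf_codim Z\<close> \<open>Z\<^sub>0 \<subseteq> Z\<close>]
      inf_dim_mono [OF X(3) \<open>X \<subseteq> Z\<close>]
    by (auto simp: G_inf_def Z\<^sub>0_def Z_def closed_corth csubspace_corth)
  with \<open>Z\<^sub>0 \<subseteq> Z\<close> \<open>X \<subseteq> Z\<close> \<open>Z\<^sub>0 \<inter> X \<subseteq> {0}\<close> \<open>Y \<inter> Z \<subseteq> X\<close> show ?thesis
    by blast
qed

section \<open>Maps sending pairs of subspaces to equivalent pairs\<close>

lemma clinear_isometry_zero:
  assumes "clinear_isometry M"
  shows "M 0 = 0"
proof -
  have "M (0 + 0) = M 0 + M 0"
    using assms by (simp only: clinear_isometry_def)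
  then show ?thesis
    by simp
qed

lemma clinear_isometry_inj:
  assumes "clinear_isometry M"
  shows "inj M"
proof (rule injI)
  fix x y
  assume "M x = M y"
  have "M (x - y + y) = M (x - y) + M y"
    using assms by (simp only: clinear_isometry_def)
  then have "M (x - y) = 0"
    using \<open>M x = M y\<close> by simp
  moreover have "norm (M (x - y)) = norm (x - y)"
    using assms by (simp only: clinear_isometry_def)
  ultimately show "x = y"
    by simp
qed

lemma inj_image_Int_subset_zero_iff:
  assumes "inj M" "M 0 = 0"
  shows "M ` A \<inter> M ` B \<subseteq> {0} \<longleftrightarrow> A \<inter> B \<subseteq> {0}"
proof -
  have "M ` A \<inter> M ` B \<subseteq> {0} \<longleftrightarrow> M ` (A \<inter> B) \<subseteq> M ` {0}"
    using assms by (simp add: image_Int)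
  also have "\<dots> \<longleftrightarrow> A \<inter> B \<subseteq> {0}"
    using assms(1) by (rule inj_image_subset_iff)
  finally show ?thesis .
qed

locale pair_equivalence_map =
  fixes G :: "'a::zero set set" and f :: "'a set \<Rightarrow> 'a set"
  assumes maps_into: "A \<in> G \<Longrightarrow> f A \<in> G"
    and nontrivial: "A \<in> G \<Longrightarrow> \<not> A \<subseteq> {0}"
    and equivalent_pair: "A \<in> G \<Longrightarrow> B \<in> G \<Longrightarrow> \<exists>M. inj M \<and> M 0 = 0 \<and> {f A, f B} = {M ` A, M ` B}"
begin

lemma f_relation_iff:
  assumes "symp R" and invariant: "\<And>M A B. inj M \<Longrightarrow> M 0 = 0 \<Longrightarrow> R (M ` A) (M ` B) \<longleftrightarrow> R A B"
    and "A \<in> G" "B \<in> G"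
  shows "R (f A) (f B) \<longleftrightarrow> R A B"
proof -
  obtain M where "inj M" "M 0 = 0" "{f A, f B} = {M ` A, M ` B}"
    using equivalent_pair [OF assms(3,4)] by blast
  then show ?thesis
    using invariant [OF \<open>inj M\<close> \<open>M 0 = 0\<close>, of A B] \<open>symp R\<close>
    by (auto simp: doubleton_eq_iff dest: sympD)
qed

lemma f_nested_iff:
  "A \<in> G \<Longrightarrow> B \<in> G \<Longrightarrow> (f A \<subseteq> f B \<or> f B \<subseteq> f A) \<longleftrightarrow> (A \<subseteq> B \<or> B \<subseteq> A)"
  by (rule f_relation_iff [where R = "\<lambda>A B. A \<subseteq> B \<or> B \<subseteq> A"])
    (auto simp: symp_def inj_image_subset_iff)

lemma f_eq_iff: "A \<in> G \<Longrightarrow> B \<in> G \<Longrightarrow> f A = f B \<longleftrightarrow> A = B"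
  by (rule f_relation_iff [where R = "(=)"]) (auto simp: symp_def inj_image_eq_iff)

lemma f_Int_subset_zero_iff:
  "A \<in> G \<Longrightarrow> B \<in> G \<Longrightarrow> f A \<inter> f B \<subseteq> {0} \<longleftrightarrow> A \<inter> B \<subseteq> {0}"
  by (rule f_relation_iff [where R = "\<lambda>A B. A \<inter> B \<subseteq> {0}"])
    (auto simp: symp_def inj_image_Int_subset_zero_iff)

lemma f_subset_if_disjoint_witness:
  assumes "X \<in> G" "Z\<^sub>0 \<in> G" "Z \<in> G" "Z\<^sub>0 \<subseteq> Z" "X \<subseteq> Z" "Z\<^sub>0 \<inter> X \<subseteq> {0}"
  shows "f X \<subseteq> f Z"
proof (rule ccontr)
  assume "\<not> f X \<subseteq> f Z"
  then have "f Z \<subseteq> f X"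
    using f_nested_iff [OF assms(1,3)] assms(5) by blast
  moreover have "f Z\<^sub>0 \<subseteq> f Z \<or> f Z \<subseteq> f Z\<^sub>0"
    using f_nested_iff [OF assms(2,3)] assms(4) by blast
  moreover have "f Z\<^sub>0 \<inter> f X \<subseteq> {0}"
    using f_Int_subset_zero_iff [OF assms(2,1)] assms(6) by blast
  ultimately have "f Z\<^sub>0 \<subseteq> {0} \<or> f Z \<subseteq> {0}"
    by blast
  then show False
    using nontrivial [OF maps_into [OF assms(2)]] nontrivial [OF maps_into [OF assms(3)]] by blast
qed

context
  assumes separating: "\<And>X Y. X \<in> G \<Longrightarrow> Y \<in> G \<Longrightarrow> X \<subseteq> Y \<Longrightarrow>
    \<exists>Z\<^sub>0\<in>G. \<exists>Z\<in>G. Z\<^sub>0 \<subseteq> Z \<and> X \<subseteq> Z \<and> Z\<^sub>0 \<inter> X \<subseteq> {0} \<and> Y \<inter> Z \<subseteq> X"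
begin

lemma f_mono:
  assumes "X \<in> G" "Y \<in> G" "X \<subseteq> Y"
  shows "f X \<subseteq> f Y"
proof (rule ccontr)
  assume "\<not> f X \<subseteq> f Y"
  then have "f Y \<subseteq> f X"
    using f_nested_iff [OF assms(1,2)] assms(3) by blast
  obtain Z\<^sub>0 Z where "Z\<^sub>0 \<in> G" "Z \<in> G"
    and Z: "Z\<^sub>0 \<subseteq> Z" "X \<subseteq> Z" "Z\<^sub>0 \<inter> X \<subseteq> {0}" "Y \<inter> Z \<subseteq> X"
    using separating [OF assms] by (elim bexE conjE) (rule that)
  have "f X \<subseteq> f Z"
    using f_subset_if_disjoint_witness \<open>X \<in> G\<close> \<open>Z\<^sub>0 \<in> G\<close> \<open>Z \<in> G\<close> Z(1-3) by blast
  then have "Y \<subseteq> Z \<or> Z \<subseteq> Y"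
    using f_nested_iff [OF \<open>Y \<in> G\<close> \<open>Z \<in> G\<close>] \<open>f Y \<subseteq> f X\<close> by blast
  then show False
  proof
    assume "Y \<subseteq> Z"
    then have "Y \<subseteq> X"
      using \<open>Y \<inter> Z \<subseteq> X\<close> by blast
    then have "X = Y"
      using \<open>X \<subseteq> Y\<close> by (rule subset_antisym [rotated])
    then show False
      using \<open>\<not> f X \<subseteq> f Y\<close> by simp
  next
    assume "Z \<subseteq> Y"
    then have "Z\<^sub>0 \<subseteq> {0}"
      using Z by blast
    then show False
      using nontrivial [OF \<open>Z\<^sub>0 \<in> G\<close>] by blast
  qed
qed

lemma f_subset_iff:
  assumes "X \<in> G" "Y \<in> G"
  shows "X \<subseteq> Y \<longleftrightarrow> f X \<subseteq> f Y"
proof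
  assume "f X \<subseteq> f Y"
  then have "X \<subseteq> Y \<or> Y \<subseteq> X"
    using f_nested_iff [OF assms] by blast
  moreover have "X = Y" if "Y \<subseteq> X"
  proof -
    have "f X = f Y"
      using f_mono [OF assms(2,1) that] \<open>f X \<subseteq> f Y\<close> by (rule subset_antisym [rotated])
    then show ?thesis
      using f_eq_iff [OF assms] by simp
  qed
  ultimately show "X \<subseteq> Y"
    by blast
qed (rule f_mono [OF assms])

end

end

theorem lemma1:
  fixes f :: "'a::complex_hilbert set \<Rightarrow> 'a set"
  assumes "inf_dim (UNIV :: 'a set)"
    and "\<forall>X\<in>G_inf. f X \<in> G_inf"
    and "\<forall>X\<in>G_inf. \<forall>Y\<in>G_inf. \<exists>M. clinear_isometry M \<and> {f X, f Y} = {M ` X, M ` Y}"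
  shows "\<forall>X\<in>G_inf. \<forall>Y\<in>G_inf. X \<subseteq> Y \<longleftrightarrow> f X \<subseteq> f Y"
proof -
  interpret pair_equivalence_map G_inf f
  proof
    show "f A \<in> G_inf" if "A \<in> G_inf" for A :: "'a set"
      using assms(2) that by blast
    show "\<not> A \<subseteq> {0}" if "A \<in> G_inf" for A :: "'a set"
      using that by (rule G_inf_not_subset_zero)
    show "\<exists>M. inj M \<and> M 0 = 0 \<and> {f A, f B} = {M ` A, M ` B}"
      if AB: "A \<in> G_inf" "B \<in> G_inf" for A B :: "'a set"
    proof -
      obtain M where M: "clinear_isometry M" "{f A, f B} = {M ` A, M ` B}"
        using assms(3) [rule_format, OF AB] by (elim exE conjE)
      then have "inj M" "M 0 = 0"
        by (simp_all add: clinear_isometry_inj clinear_isometry_zero)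
      with M(2) show ?thesis
        by (intro exI [of _ M]) simp
    qed
  qed
  show ?thesis
    using f_subset_iff [OF exists_separating_pair] by blast
qed

end
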